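(* Let $\mu$ be a signature and let $\mathcal A$ be an ideal of $\Omega_\mu$. If $\mathcal A$ has the extension property, then $\mathcal A$ is representable, i.e. there is a relational structure $\mathfrak A$ of signature $\mu$ with $\mathrm{age}(\mathfrak A)=\mathcal A$.
   Context: A signature is a map $\mu:I\to\mathbb{N}^*$; a relational structure of signature $\mu$ is $\mathfrak A=(A;(R_i)_{i\in I})$ with $R_i$ a $\mu_i$-ary relation on $A$. Embeddings are injective maps preserving and reflecting all relations; $\mathfrak A\le \mathfrak B$ means $\mathfrak A$ embeds into $\mathfrak B$. $\Omega_\mu$ is the set of isomorphism types of finite structures of signature $\mu$, ordered by $\le$; an ideal is a non-empty, downward closed, up-directed subset. The age of $\mathfrak A$ is the set of isomorphism types of its finite induced substructures. For an ideal $\mathcal A$ of $\Omega_\mu$, a structure $\mathfrak A$ of signature $\mu$ (of any cardinality) with $\mathrm{age}(\mathfrak A)\subseteq\mathcal A$ is extendable w.r.t. $\mathcal A$ if for every $\mathfrak B\in\mathcal A$ there is a structure $\mathfrak C$ with $\mathrm{age}(\mathfrak C)\subseteq\mathcal A$ which extends both $\mathfrak A$ and $\mathfrak B$ (both embed into $\mathfrak C$). $\mathcal A$ has the extension property if every structure $\mathfrak A$ of signature $\mu$ with $|A|<\kappa:=|\mathcal A|$ and $\mathrm{age}(\mathfrak A)\subseteq\mathcal A$ is extendable w.r.t. $\mathcal A$. *)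

theory Defs
  imports Main
begin

text \<open>The signature is a pair (I, mu) with I the index set and mu :: 'i => nat the arities.\<close>

type_synonym ('i, 'a) struc = "'a set \<times> ('i \<Rightarrow> 'a list \<Rightarrow> bool)"

definition signature :: "'i set \<Rightarrow> ('i \<Rightarrow> nat) \<Rightarrow> bool" where
  "signature I mu \<longleftrightarrow> (\<forall>i\<in>I. mu i > 0)"

definition is_struct :: "'i set \<Rightarrow> ('i \<Rightarrow> nat) \<Rightarrow> ('i, 'a) struc \<Rightarrow> bool" where
  "is_struct I mu S \<longleftrightarrow>
     (\<forall>i xs. snd S i xs \<longrightarrow> i \<in> I \<and> length xs = mu i \<and> set xs \<subseteq> fst S)"

definition embedding :: "'i set \<Rightarrow> ('i \<Rightarrow> nat) \<Rightarrow> ('a \<Rightarrow> 'b) \<Rightarrow> ('i, 'a) struc \<Rightarrow> ('i, 'b) struc \<Rightarrow> bool" where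
  "embedding I mu f S T \<longleftrightarrow>
     inj_on f (fst S) \<and> f ` fst S \<subseteq> fst T \<and>
     (\<forall>i\<in>I. \<forall>xs. length xs = mu i \<and> set xs \<subseteq> fst S \<longrightarrow> (snd S i xs \<longleftrightarrow> snd T i (map f xs)))"

definition embeds :: "'i set \<Rightarrow> ('i \<Rightarrow> nat) \<Rightarrow> ('i, 'a) struc \<Rightarrow> ('i, 'b) struc \<Rightarrow> bool" where
  "embeds I mu S T \<longleftrightarrow> (\<exists>f. embedding I mu f S T)"

definition isomorphic :: "'i set \<Rightarrow> ('i \<Rightarrow> nat) \<Rightarrow> ('i, 'a) struc \<Rightarrow> ('i, 'b) struc \<Rightarrow> bool" where
  "isomorphic I mu S T \<longleftrightarrow> (\<exists>f. embedding I mu f S T \<and> bij_betw f (fst S) (fst T))"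

text \<open>Finite structures are represented by structures whose carrier is a finite set of
  natural numbers (every finite structure is isomorphic to one of these).\<close>
definition fin_structs :: "'i set \<Rightarrow> ('i \<Rightarrow> nat) \<Rightarrow> ('i, nat) struc set" where
  "fin_structs I mu = {S. is_struct I mu S \<and> finite (fst S)}"

definition isotype :: "'i set \<Rightarrow> ('i \<Rightarrow> nat) \<Rightarrow> ('i, 'a) struc \<Rightarrow> ('i, nat) struc set" where
  "isotype I mu S = {T \<in> fin_structs I mu. isomorphic I mu T S}"

definition Omega :: "'i set \<Rightarrow> ('i \<Rightarrow> nat) \<Rightarrow> ('i, nat) struc set set" where
  "Omega I mu = isotype I mu ` fin_structs I mu"

definition type_le :: "'i set \<Rightarrow> ('i \<Rightarrow> nat) \<Rightarrow> ('i, nat) struc set \<Rightarrow> ('i, nat) struc set \<Rightarrow> bool" where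
  "type_le I mu X Y \<longleftrightarrow> (\<exists>S\<in>X. \<exists>T\<in>Y. embeds I mu S T)"

definition ideal :: "'i set \<Rightarrow> ('i \<Rightarrow> nat) \<Rightarrow> ('i, nat) struc set set \<Rightarrow> bool" where
  "ideal I mu A \<longleftrightarrow>
     A \<subseteq> Omega I mu \<and> A \<noteq> {} \<and>
     (\<forall>X\<in>A. \<forall>Y\<in>Omega I mu. type_le I mu Y X \<longrightarrow> Y \<in> A) \<and>
     (\<forall>X\<in>A. \<forall>Y\<in>A. \<exists>Z\<in>A. type_le I mu X Z \<and> type_le I mu Y Z)"

definition induced :: "('i, 'a) struc \<Rightarrow> 'a set \<Rightarrow> ('i, 'a) struc" where
  "induced S X = (X, \<lambda>i xs. snd S i xs \<and> set xs \<subseteq> X)"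

definition age :: "'i set \<Rightarrow> ('i \<Rightarrow> nat) \<Rightarrow> ('i, 'a) struc \<Rightarrow> ('i, nat) struc set set" where
  "age I mu S = {isotype I mu (induced S X) | X. X \<subseteq> fst S \<and> finite X}"

text \<open>Extendability w.r.t. an ideal; the amalgamating structure C is taken with the same
  carrier type as the given structure.\<close>
definition extendable :: "'i set \<Rightarrow> ('i \<Rightarrow> nat) \<Rightarrow> ('i, nat) struc set set \<Rightarrow> ('i, 'a) struc \<Rightarrow> bool" where
  "extendable I mu A S \<longleftrightarrow>
     age I mu S \<subseteq> A \<and>
     (\<forall>X\<in>A. \<forall>B\<in>X. \<exists>C :: ('i, 'a) struc.
        is_struct I mu C \<and> age I mu C \<subseteq> A \<and> embeds I mu S C \<and> embeds I mu B C)"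

text \<open>Universe type for structures of cardinality up to |Omega_mu| (infinite).\<close>
type_synonym 'i univ = "('i, nat) struc set"

text \<open>Structures are taken with carrier in the type 'i univ, which is infinite and
  contains a copy of every set of cardinality < |A|.\<close>
definition extension_property :: "'i set \<Rightarrow> ('i \<Rightarrow> nat) \<Rightarrow> ('i, nat) struc set set \<Rightarrow> bool" where
  "extension_property I mu A \<longleftrightarrow>
     (\<forall>S :: ('i, 'i univ) struc.
        is_struct I mu S \<and> (card_of (fst S), card_of A) \<in> ordLess \<and> age I mu S \<subseteq> A
        \<longrightarrow> extendable I mu A S)"

end

theory Submission
  imports Defs
begin

(* If A is finite, directedness gives a greatest type in A, and a structure of that type has
   age exactly A.

   If A is infinite, well-order it by the cardinal order |A|, so that every proper initial
   segment has fewer than |A| elements, and reserve for each type X the finitely many names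
   enc (X, n), n ranging over the carrier of a fixed representative of X.  Zorn's lemma, for
   the order "induced substructure", applies to the structures M with age inside A whose
   elements are all named after types in the longest initial segment of A contained in age M:
   a chain has its union as an upper bound.  A maximal such M realises all of A.  Otherwise let
   X be the least type it misses; its carrier is named after a proper initial segment, so M has
   fewer than |A| elements, and the extension property embeds M and a representative B of X
   into a common C with age inside A.  Pulling C back to the carrier of M together with fresh
   names for the points of B outside the image of M yields a proper extension of M. *)

unbundle cardinal_syntax

section \<open>Embeddings, isomorphisms and ages\<close>

lemma embedding_id: "embedding I mu id S S"
  unfolding embedding_def by auto

lemma embedding_comp:
  assumes f: "embedding I mu f S T" and g: "embedding I mu g T U"
  shows "embedding I mu (g \<circ> f) S U"
proof -
  have "inj_on (g \<circ> f) (fst S)" "(g \<circ> f) ` fst S \<subseteq> fst U"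
    using assms unfolding embedding_def by (auto intro: comp_inj_on inj_on_subset)
      (use image_subset_iff in blast)
  moreover have "snd S i xs \<longleftrightarrow> snd U i (map (g \<circ> f) xs)"
    if "i \<in> I" "length xs = mu i" "set xs \<subseteq> fst S" for i xs
  proof -
    have "set (map f xs) \<subseteq> fst T" using that f unfolding embedding_def by auto
    then show ?thesis using that f g unfolding embedding_def by simp
  qed
  ultimately show ?thesis unfolding embedding_def by blast
qed

lemma embedding_empty:
  assumes "signature I mu" "fst S = {}"
  shows "embedding I mu f S T"
  using assms unfolding signature_def embedding_def by fastforce

lemma isomorphic_refl: "isomorphic I mu S S"
  unfolding isomorphic_def using embedding_id bij_betw_id by (metis id_apply)

lemma isomorphic_trans:
  "isomorphic I mu S T \<Longrightarrow> isomorphic I mu T U \<Longrightarrow> isomorphic I mu S U"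
  unfolding isomorphic_def by (meson bij_betw_trans embedding_comp)

lemma isomorphic_sym:
  assumes "isomorphic I mu S T"
  shows "isomorphic I mu T S"
proof -
  obtain f where f: "embedding I mu f S T" "bij_betw f (fst S) (fst T)"
    using assms unfolding isomorphic_def by blast
  define g where "g = the_inv_into (fst S) f"
  have g: "bij_betw g (fst T) (fst S)"
    unfolding g_def using f(2) by (rule bij_betw_the_inv_into)
  have "snd T i xs \<longleftrightarrow> snd S i (map g xs)"
    if "i \<in> I" "length xs = mu i" "set xs \<subseteq> fst T" for i xs
  proof -
    have "map f (map g xs) = xs"
      using that f(2) by (simp add: map_idI subset_iff g_def f_the_inv_into_f_bij_betw)
    moreover have "set (map g xs) \<subseteq> fst S"
      using that g by (auto dest: bij_betw_apply)
    ultimately show ?thesis using that f(1) unfolding embedding_def by (metis length_map)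
  qed
  then have "embedding I mu g T S"
    using g unfolding embedding_def bij_betw_def by blast
  then show ?thesis using g unfolding isomorphic_def by blast
qed

lemma isotype_eq_if_isomorphic:
  assumes "isomorphic I mu S T"
  shows "isotype I mu S = isotype I mu T"
  using isomorphic_trans[OF _ assms] isomorphic_trans[OF _ isomorphic_sym[OF assms]]
  unfolding isotype_def by blast

lemma isomorphic_induced_image:
  assumes f: "embedding I mu f S T" and X: "X \<subseteq> fst S"
  shows "isomorphic I mu (induced S X) (induced T (f ` X))"
proof -
  have "inj_on f X" using f X unfolding embedding_def by (meson inj_on_subset)
  moreover have "embedding I mu f (induced S X) (induced T (f ` X))"
    using f X \<open>inj_on f X\<close> unfolding embedding_def induced_def by auto
  ultimately show ?thesis unfolding isomorphic_def induced_def by (auto intro: bij_betw_imageI)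
qed

lemma isomorphic_induced_carrier: "isomorphic I mu (induced S (fst S)) S"
  unfolding isomorphic_def embedding_def induced_def
  by (rule exI[of _ id]) auto

lemma induced_carrier: "is_struct I mu S \<Longrightarrow> induced S (fst S) = S"
  unfolding is_struct_def induced_def by (auto simp: prod_eq_iff fun_eq_iff)

lemma induced_induced: "X \<subseteq> Y \<Longrightarrow> induced (induced S Y) X = induced S X"
  unfolding induced_def by auto

lemma is_struct_induced: "is_struct I mu S \<Longrightarrow> is_struct I mu (induced S X)"
  unfolding is_struct_def induced_def by auto

lemma embedding_induced: "X \<subseteq> fst S \<Longrightarrow> embedding I mu id (induced S X) S"
  unfolding embedding_def induced_def by auto

lemma age_mono:
  assumes "embedding I mu f S T"
  shows "age I mu S \<subseteq> age I mu T"
proof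
  fix Y assume "Y \<in> age I mu S"
  then obtain X where X: "Y = isotype I mu (induced S X)" "X \<subseteq> fst S" "finite X"
    unfolding age_def by blast
  then have "Y = isotype I mu (induced T (f ` X))"
    using isomorphic_induced_image[OF assms] isotype_eq_if_isomorphic by blast
  moreover have "f ` X \<subseteq> fst T" using assms X(2) unfolding embedding_def by blast
  ultimately show "Y \<in> age I mu T" using X(3) unfolding age_def by blast
qed

lemma age_eq_if_isomorphic:
  "isomorphic I mu S T \<Longrightarrow> age I mu S = age I mu T"
  using age_mono isomorphic_sym unfolding isomorphic_def by (metis subset_antisym)

lemma isotype_in_age_if_image_subset:
  assumes \<phi>: "embedding I mu \<phi> N C" and g: "embedding I mu g B C"
    and fin: "finite (fst B)" and img: "g ` fst B \<subseteq> \<phi> ` fst N"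
  shows "isotype I mu B \<in> age I mu N"
proof -
  define X where "X = {y \<in> fst N. \<phi> y \<in> g ` fst B}"
  have X: "X \<subseteq> fst N" unfolding X_def by blast
  have \<phi>X: "\<phi> ` X = g ` fst B"
  proof
    show "\<phi> ` X \<subseteq> g ` fst B" unfolding X_def by blast
    show "g ` fst B \<subseteq> \<phi> ` X"
    proof
      fix z assume z: "z \<in> g ` fst B"
      then obtain y where "y \<in> fst N" "z = \<phi> y" using img by blast
      then show "z \<in> \<phi> ` X" using z unfolding X_def by blast
    qed
  qed
  have "inj_on \<phi> X" using \<phi> X unfolding embedding_def by (meson inj_on_subset)
  then have "finite X" using \<phi>X fin by (metis finite_imageD finite_imageI)
  have "isotype I mu (induced N X) = isotype I mu (induced C (g ` fst B))"
    using isomorphic_induced_image[OF \<phi> X] \<phi>X isotype_eq_if_isomorphic by metis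
  also have "\<dots> = isotype I mu B"
    using isomorphic_induced_image[OF g order_refl] isomorphic_induced_carrier
    by (metis isomorphic_sym isomorphic_trans isotype_eq_if_isomorphic)
  finally show ?thesis using X \<open>finite X\<close> unfolding age_def by blast
qed

lemma isotype_in_age:
  assumes "embedding I mu f B T" "finite (fst B)"
  shows "isotype I mu B \<in> age I mu T"
  using isotype_in_age_if_image_subset[OF embedding_id assms(1,2)] assms(1)
  unfolding embedding_def by simp

section \<open>Isomorphism types and ideals\<close>

lemma Omega_memberD:
  assumes "X \<in> Omega I mu" "B \<in> X"
  shows "B \<in> fin_structs I mu" "X = isotype I mu B"
proof -
  obtain R where R: "X = isotype I mu R" "R \<in> fin_structs I mu"
    using assms(1) unfolding Omega_def by blast
  then show "B \<in> fin_structs I mu" using assms(2) unfolding isotype_def by blast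
  show "X = isotype I mu B"
    using R assms(2) isotype_eq_if_isomorphic unfolding isotype_def by blast
qed

lemma Omega_member_nonempty: "X \<in> Omega I mu \<Longrightarrow> \<exists>B. B \<in> X"
  unfolding Omega_def isotype_def using isomorphic_refl by blast

lemma isotype_in_Omega: "B \<in> fin_structs I mu \<Longrightarrow> isotype I mu B \<in> Omega I mu"
  unfolding Omega_def by blast

lemma type_le_refl: "X \<in> Omega I mu \<Longrightarrow> type_le I mu X X"
  unfolding type_le_def embeds_def using Omega_member_nonempty embedding_id by blast

lemma type_le_trans:
  assumes Y: "Y \<in> Omega I mu" and "type_le I mu X Y" "type_le I mu Y W"
  shows "type_le I mu X W"
proof -
  obtain S T f where S: "S \<in> X" and T: "T \<in> Y" and f: "embedding I mu f S T"
    using assms(2) unfolding type_le_def embeds_def by blast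
  obtain T' U g where T': "T' \<in> Y" and U: "U \<in> W" and g: "embedding I mu g T' U"
    using assms(3) unfolding type_le_def embeds_def by blast
  obtain h where h: "embedding I mu h T T'"
    using Omega_memberD(2)[OF Y T'] T unfolding isotype_def isomorphic_def by blast
  have "embedding I mu (g \<circ> (h \<circ> f)) S U"
    using f g h by (blast intro: embedding_comp)
  then show ?thesis using S U unfolding type_le_def embeds_def by blast
qed

lemma ideal_upper_bound:
  assumes A: "ideal I mu A" and F: "finite F" "F \<noteq> {}" "F \<subseteq> A"
  shows "\<exists>Z\<in>A. \<forall>X\<in>F. type_le I mu X Z"
  using F
proof (induction F rule: finite_ne_induct)
  case (singleton X)
  then show ?case using A type_le_refl unfolding ideal_def by blast
next
  case (insert X F)
  then obtain Z where Z: "Z \<in> A" "\<forall>Y\<in>F. type_le I mu Y Z" by blast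
  obtain W where W: "W \<in> A" "type_le I mu X W" "type_le I mu Z W"
    using A Z(1) insert.prems unfolding ideal_def by blast
  have "Z \<in> Omega I mu" using A Z(1) unfolding ideal_def by blast
  then have "\<forall>Y\<in>F. type_le I mu Y W" using Z(2) W(3) type_le_trans by blast
  then show ?case using W by blast
qed

lemma age_subset_ideal:
  assumes A: "ideal I mu A" and "Z \<in> A" "T \<in> Z" and f: "embedding I mu f S T"
  shows "age I mu S \<subseteq> A"
proof -
  have Z: "Z \<in> Omega I mu" using A \<open>Z \<in> A\<close> unfolding ideal_def by blast
  have T: "is_struct I mu T" "finite (fst T)"
    using Omega_memberD(1)[OF Z \<open>T \<in> Z\<close>] unfolding fin_structs_def by blast+
  have "Y \<in> A" if "Y \<in> age I mu T" for Y
  proof -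
    obtain X where X: "Y = isotype I mu (induced T X)" "X \<subseteq> fst T"
      using \<open>Y \<in> age I mu T\<close> unfolding age_def by blast
    have "finite X" using X(2) T(2) by (rule finite_subset)
    then have "induced T X \<in> fin_structs I mu"
      using is_struct_induced[OF T(1)] unfolding fin_structs_def induced_def by simp
    then have "Y \<in> Omega I mu" "induced T X \<in> Y"
      using X(1) isotype_in_Omega isomorphic_refl unfolding isotype_def by blast+
    then have "type_le I mu Y Z"
      using \<open>T \<in> Z\<close> embedding_induced[OF X(2)] unfolding type_le_def embeds_def by blast
    then show "Y \<in> A" using A \<open>Z \<in> A\<close> \<open>Y \<in> Omega I mu\<close> unfolding ideal_def by blast
  qed
  then show ?thesis using age_mono[OF f] by blast
qed

lemma ideal_subset_age:
  assumes A: "ideal I mu A" and "Z \<in> A" "T \<in> Z" and greatest: "\<forall>X\<in>A. type_le I mu X Z"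
  shows "A \<subseteq> age I mu T"
proof
  fix X assume "X \<in> A"
  then have X: "X \<in> Omega I mu" and Z: "Z \<in> Omega I mu"
    using A \<open>Z \<in> A\<close> unfolding ideal_def by blast+
  obtain B T' f where "B \<in> X" "T' \<in> Z" "embedding I mu f B T'"
    using greatest \<open>X \<in> A\<close> unfolding type_le_def embeds_def by blast
  moreover obtain h where "embedding I mu h T' T"
    using Omega_memberD(2)[OF Z \<open>T \<in> Z\<close>] \<open>T' \<in> Z\<close> unfolding isotype_def isomorphic_def by blast
  ultimately have "embedding I mu (h \<circ> f) B T" "B \<in> fin_structs I mu" "X = isotype I mu B"
    using embedding_comp Omega_memberD[OF X] by blast+
  then show "X \<in> age I mu T"
    using isotype_in_age unfolding fin_structs_def by blast
qed

section \<open>Pullbacks and the finite case\<close>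

definition pullback ::
    "'i set \<Rightarrow> ('i \<Rightarrow> nat) \<Rightarrow> ('i, 'b) struc \<Rightarrow> 'a set \<Rightarrow> ('a \<Rightarrow> 'b) \<Rightarrow> ('i, 'a) struc"
  where "pullback I mu C Y \<phi> =
    (Y, \<lambda>i xs. i \<in> I \<and> length xs = mu i \<and> set xs \<subseteq> Y \<and> snd C i (map \<phi> xs))"

lemma is_struct_pullback: "is_struct I mu (pullback I mu C Y \<phi>)"
  unfolding is_struct_def pullback_def by auto

lemma embedding_pullback:
  "inj_on \<phi> Y \<Longrightarrow> \<phi> ` Y \<subseteq> fst C \<Longrightarrow> embedding I mu \<phi> (pullback I mu C Y \<phi>) C"
  unfolding embedding_def pullback_def by auto

lemma ex_isomorphic_copy:
  fixes T :: "('i, 'a) struc" and h :: "'a \<Rightarrow> 'b"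
  assumes "inj_on h (fst T)"
  shows "\<exists>S :: ('i, 'b) struc. is_struct I mu S \<and> isomorphic I mu S T"
proof -
  define \<phi> where "\<phi> = the_inv_into (fst T) h"
  have \<phi>: "bij_betw \<phi> (h ` fst T) (fst T)"
    unfolding \<phi>_def using assms by (simp add: bij_betw_the_inv_into bij_betw_imageI)
  then have "embedding I mu \<phi> (pullback I mu T (h ` fst T) \<phi>) T"
    by (intro embedding_pullback) (auto simp: bij_betw_def)
  then have "isomorphic I mu (pullback I mu T (h ` fst T) \<phi>) T"
    using \<phi> unfolding isomorphic_def pullback_def by auto
  then show ?thesis using is_struct_pullback by blast
qed

lemma representable_if_finite:
  assumes A: "ideal I mu A" and "finite A"
  shows "\<exists>S :: ('i, 'i univ) struc. is_struct I mu S \<and> age I mu S = A"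
proof -
  have "A \<noteq> {}" "A \<subseteq> Omega I mu" using A unfolding ideal_def by blast+
  then obtain Z where Z: "Z \<in> A" "\<forall>X\<in>A. type_le I mu X Z"
    using ideal_upper_bound[OF A \<open>finite A\<close>] by blast
  then obtain T where "T \<in> Z"
    using \<open>A \<subseteq> Omega I mu\<close> Omega_member_nonempty by blast
  then have "age I mu T = A"
    using age_subset_ideal[OF A Z(1) _ embedding_id] ideal_subset_age[OF A Z(1) _ Z(2)] by blast
  moreover have "inj_on (\<lambda>n. {({n}, \<lambda>_ _. False)} :: 'i univ) (fst T)"
    by (simp add: inj_on_def)
  then obtain S :: "('i, 'i univ) struc" where "is_struct I mu S" "isomorphic I mu S T"
    using ex_isomorphic_copy by blast
  ultimately show ?thesis using age_eq_if_isomorphic by blast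
qed

section \<open>Induced substructures and unions of chains\<close>

definition substruct :: "('i, 'a) struc \<Rightarrow> ('i, 'a) struc \<Rightarrow> bool"
  where "substruct M N \<longleftrightarrow> fst M \<subseteq> fst N \<and> induced N (fst M) = M"

lemma embedding_substruct:
  assumes "substruct M N"
  shows "embedding I mu id M N"
proof -
  have "embedding I mu id (induced N (fst M)) N"
    using assms unfolding substruct_def by (blast intro: embedding_induced)
  then show ?thesis using assms unfolding substruct_def by simp
qed

lemma substruct_snd_iff:
  assumes "substruct M N"
  shows "snd M i xs \<longleftrightarrow> snd N i xs \<and> set xs \<subseteq> fst M"
proof -
  have "snd M i xs = snd (induced N (fst M)) i xs"
    using assms unfolding substruct_def by simp
  also have "\<dots> \<longleftrightarrow> snd N i xs \<and> set xs \<subseteq> fst M" by (simp add: induced_def)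
  finally show ?thesis .
qed

lemma substruct_refl: "is_struct I mu M \<Longrightarrow> substruct M M"
  unfolding substruct_def by (simp add: induced_carrier)

lemma substruct_trans:
  assumes "substruct M N" "substruct N K"
  shows "substruct M K"
proof -
  have "induced K (fst M) = induced (induced K (fst N)) (fst M)"
    using assms(1) unfolding substruct_def by (simp add: induced_induced)
  then show ?thesis using assms unfolding substruct_def by auto
qed

lemma substruct_antisym:
  assumes "is_struct I mu N" "substruct M N" "substruct N M"
  shows "M = N"
proof -
  have "fst M = fst N" using assms(2,3) unfolding substruct_def by blast
  then show ?thesis using assms(1,2) induced_carrier unfolding substruct_def by metis
qed

lemma substruct_pullback:
  assumes M: "is_struct I mu M" and f: "embedding I mu f M C"
    and Y: "fst M \<subseteq> Y" and \<phi>: "\<forall>x\<in>fst M. \<phi> x = f x"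
  shows "substruct M (pullback I mu C Y \<phi>)"
proof -
  have "snd (pullback I mu C Y \<phi>) i xs \<and> set xs \<subseteq> fst M \<longleftrightarrow> snd M i xs" for i xs
  proof (cases "set xs \<subseteq> fst M")
    case True
    have map_eq: "map \<phi> xs = map f xs" using True \<phi> by (auto intro: map_cong)
    have "snd (pullback I mu C Y \<phi>) i xs \<longleftrightarrow> i \<in> I \<and> length xs = mu i \<and> snd C i (map f xs)"
      using True Y unfolding pullback_def snd_conv map_eq by blast
    also have "\<dots> \<longleftrightarrow> snd M i xs"
      using True M f unfolding is_struct_def embedding_def by blast
    finally show ?thesis using True by blast
  next
    case False
    then show ?thesis using M unfolding is_struct_def by blast
  qed
  then show ?thesis
    using Y unfolding substruct_def pullback_def induced_def by (simp add: prod_eq_iff fun_eq_iff)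
qed

definition chain_union :: "('i, 'a) struc set \<Rightarrow> ('i, 'a) struc"
  where "chain_union \<C> = ((\<Union>M\<in>\<C>. fst M), \<lambda>i xs. \<exists>M\<in>\<C>. snd M i xs)"

lemma is_struct_chain_union:
  assumes "\<And>M. M \<in> \<C> \<Longrightarrow> is_struct I mu M"
  shows "is_struct I mu (chain_union \<C>)"
proof (unfold is_struct_def, intro allI impI)
  fix i xs assume "snd (chain_union \<C>) i xs"
  then obtain M where "M \<in> \<C>" "snd M i xs" unfolding chain_union_def by auto
  then show "i \<in> I \<and> length xs = mu i \<and> set xs \<subseteq> fst (chain_union \<C>)"
    using assms[of M] unfolding is_struct_def chain_union_def by auto
qed

lemma substruct_chain_union:
  assumes chain: "\<And>M N. M \<in> \<C> \<Longrightarrow> N \<in> \<C> \<Longrightarrow> substruct M N \<or> substruct N M"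
    and M: "M \<in> \<C>" "is_struct I mu M"
  shows "substruct M (chain_union \<C>)"
proof -
  have snd_iff: "snd M i xs \<longleftrightarrow> (\<exists>N\<in>\<C>. snd N i xs) \<and> set xs \<subseteq> fst M" for i xs
  proof
    assume "snd M i xs"
    then show "(\<exists>N\<in>\<C>. snd N i xs) \<and> set xs \<subseteq> fst M"
      using M unfolding is_struct_def by blast
  next
    assume "(\<exists>N\<in>\<C>. snd N i xs) \<and> set xs \<subseteq> fst M"
    then obtain N where N: "N \<in> \<C>" "snd N i xs" and xs: "set xs \<subseteq> fst M" by blast
    from chain[OF M(1) N(1)] show "snd M i xs"
    proof
      assume "substruct M N"
      then show ?thesis using N(2) xs by (simp add: substruct_snd_iff)
    next
      assume "substruct N M"
      then show ?thesis using N(2) by (simp add: substruct_snd_iff)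
    qed
  qed
  have "induced (chain_union \<C>) (fst M) = M"
  proof (rule prod_eqI)
    show "snd (induced (chain_union \<C>) (fst M)) = snd M"
      using snd_iff by (simp add: induced_def chain_union_def fun_eq_iff)
  qed (simp add: induced_def)
  then show ?thesis using M(1) unfolding substruct_def chain_union_def by auto
qed

lemma age_chain_union:
  assumes chain: "\<And>M N. M \<in> \<C> \<Longrightarrow> N \<in> \<C> \<Longrightarrow> substruct M N \<or> substruct N M"
    and structs: "\<And>M. M \<in> \<C> \<Longrightarrow> is_struct I mu M" and "\<C> \<noteq> {}"
  shows "age I mu (chain_union \<C>) = (\<Union>M\<in>\<C>. age I mu M)"
proof
  show "(\<Union>M\<in>\<C>. age I mu M) \<subseteq> age I mu (chain_union \<C>)"
  proof (rule UN_least)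
    fix M assume "M \<in> \<C>"
    then have "substruct M (chain_union \<C>)"
      using structs by (blast intro: substruct_chain_union[OF chain])
    then show "age I mu M \<subseteq> age I mu (chain_union \<C>)"
      by (rule age_mono[OF embedding_substruct])
  qed
next
  show "age I mu (chain_union \<C>) \<subseteq> (\<Union>M\<in>\<C>. age I mu M)"
  proof
    fix Y assume "Y \<in> age I mu (chain_union \<C>)"
    then obtain X where X: "Y = isotype I mu (induced (chain_union \<C>) X)"
      "X \<subseteq> \<Union>(fst ` \<C>)" "finite X"
      unfolding age_def chain_union_def by auto
    have "subset.chain UNIV (fst ` \<C>)"
    proof (unfold subset_chain_def, intro conjI ballI)
      fix A B assume "A \<in> fst ` \<C>" "B \<in> fst ` \<C>"
      then obtain M N where "M \<in> \<C>" "N \<in> \<C>" "A = fst M" "B = fst N" by blast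
      moreover have "substruct M N \<or> substruct N M" using chain \<open>M \<in> \<C>\<close> \<open>N \<in> \<C>\<close> by blast
      ultimately show "A \<subseteq> B \<or> B \<subseteq> A" unfolding substruct_def by blast
    qed simp
    moreover have "fst ` \<C> \<noteq> {}" using \<open>\<C> \<noteq> {}\<close> by blast
    ultimately obtain A where "A \<in> fst ` \<C>" "X \<subseteq> A"
      using finite_subset_Union_chain[OF X(3) X(2)] by blast
    then obtain M where M: "M \<in> \<C>" "X \<subseteq> fst M" by blast
    have "induced (chain_union \<C>) X = induced (induced (chain_union \<C>) (fst M)) X"
      using M(2) by (simp add: induced_induced)
    also have "\<dots> = induced M X"
      using substruct_chain_union[OF chain M(1) structs[OF M(1)]] unfolding substruct_def by simp
    finally have "Y = isotype I mu (induced M X)" using X(1) by simp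
    then have "Y \<in> age I mu M" using M(2) X(3) unfolding age_def by blast
    then show "Y \<in> (\<Union>M\<in>\<C>. age I mu M)" using M(1) by blast
  qed
qed

lemma inj_on_glue:
  assumes f: "inj_on f X" and g: "inj_on g Y" and disj: "f ` X \<inter> g ` Y = {}"
    and h: "inj_on h Y" "h ` Y \<inter> X = {}"
  defines "\<phi> \<equiv> \<lambda>z. if z \<in> X then f z else g (inv_into Y h z)"
  shows "inj_on \<phi> (X \<union> h ` Y)" and "\<phi> ` (X \<union> h ` Y) = f ` X \<union> g ` Y"
proof -
  have \<phi>h: "\<phi> (h y) = g y" if "y \<in> Y" for y
    using that h unfolding \<phi>_def by auto
  have "\<phi> ` X = f ` X" by (rule image_cong) (simp_all add: \<phi>_def)
  moreover have "\<phi> ` h ` Y = g ` Y" unfolding image_image by (rule image_cong) (simp_all add: \<phi>h)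
  ultimately have img: "\<phi> ` X = f ` X" "\<phi> ` h ` Y = g ` Y" .
  then show "\<phi> ` (X \<union> h ` Y) = f ` X \<union> g ` Y" by (simp add: image_Un)
  have "inj_on \<phi> X" using f unfolding \<phi>_def by (simp add: inj_on_def)
  moreover have "inj_on \<phi> (h ` Y)"
  proof (rule inj_onI)
    fix x y assume "x \<in> h ` Y" "y \<in> h ` Y" "\<phi> x = \<phi> y"
    then obtain a b where "a \<in> Y" "b \<in> Y" "x = h a" "y = h b" "g a = g b" using \<phi>h by auto
    then show "x = y" using g by (auto dest: inj_onD)
  qed
  moreover have "\<phi> ` (X - h ` Y) \<inter> \<phi> ` (h ` Y - X) = {}"
    using img disj image_mono[OF Diff_subset, of \<phi> X "h ` Y"]
      image_mono[OF Diff_subset, of \<phi> "h ` Y" X] by blast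
  ultimately show "inj_on \<phi> (X \<union> h ` Y)" unfolding inj_on_Un by (intro conjI)
qed

lemma ex_extension_realizing:
  fixes M :: "('i, 'a) struc" and B :: "('i, 'b) struc" and C :: "('i, 'c) struc"
  assumes M: "is_struct I mu M" and f: "embedding I mu f M C" and g: "embedding I mu g B C"
    and B: "finite (fst B)" and h: "inj_on h (fst B)" "h ` fst B \<inter> fst M = {}"
  shows "\<exists>M'. is_struct I mu M' \<and> substruct M M' \<and> fst M' \<subseteq> fst M \<union> h ` fst B
    \<and> age I mu M' \<subseteq> age I mu C \<and> isotype I mu B \<in> age I mu M'"
proof -
  \<comment> \<open>Points of B already in the image of M are identified with their preimages in M;
    the others get the fresh names h b.\<close>
  define New where "New = {b \<in> fst B. g b \<notin> f ` fst M}"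
  define Y where "Y = fst M \<union> h ` New"
  define \<phi> where "\<phi> = (\<lambda>y. if y \<in> fst M then f y else g (inv_into New h y))"
  have New: "New \<subseteq> fst B" unfolding New_def by blast
  have f': "inj_on f (fst M)" "f ` fst M \<subseteq> fst C"
    and g': "inj_on g (fst B)" "g ` fst B \<subseteq> fst C"
    using f g unfolding embedding_def by blast+
  have disj: "f ` fst M \<inter> g ` New = {}" unfolding New_def by (auto simp: image_iff)
  have h': "inj_on h New" "h ` New \<inter> fst M = {}"
    using inj_on_subset[OF h(1) New] h(2) New by auto
  have inj: "inj_on \<phi> Y" and \<phi>Y: "\<phi> ` Y = f ` fst M \<union> g ` New"
    unfolding \<phi>_def Y_def by (fact inj_on_glue[OF f'(1) inj_on_subset[OF g'(1) New] disj h'])+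
  have "\<phi> ` Y \<subseteq> fst C" unfolding \<phi>Y using f'(2) g'(2) New
    by (auto simp: image_subset_iff subset_iff)
  define M' where "M' = pullback I mu C Y \<phi>"
  have emb: "embedding I mu \<phi> M' C"
    unfolding M'_def using inj \<open>\<phi> ` Y \<subseteq> fst C\<close> by (rule embedding_pullback)
  have carrier: "fst M' = Y" unfolding M'_def pullback_def by simp
  have "substruct M M'"
    unfolding M'_def using M f by (rule substruct_pullback) (auto simp: Y_def \<phi>_def)
  moreover have "fst M' \<subseteq> fst M \<union> h ` fst B" using New unfolding carrier Y_def by blast
  moreover have "g ` fst B \<subseteq> \<phi> ` fst M'" unfolding carrier \<phi>Y New_def by blast
  then have "isotype I mu B \<in> age I mu M'" by (rule isotype_in_age_if_image_subset[OF emb g B])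
  ultimately show ?thesis using is_struct_pullback age_mono[OF emb] unfolding M'_def by blast
qed

section \<open>The infinite case\<close>

lemma card_of_ordLess_if_finite: "finite A \<Longrightarrow> infinite B \<Longrightarrow> |A| <o |B|"
  using finite_ordLess_infinite[OF card_of_Well_order card_of_Well_order]
  by (simp add: Field_card_of)

lemma card_of_Sigma_finite_ordLess:
  assumes A: "infinite A" and S: "|S| <o |A|" and F: "\<forall>x\<in>S. finite (F x)"
  shows "|SIGMA x:S. F x| <o |A|"
proof (cases "finite S")
  case True
  then have "finite (SIGMA x:S. F x)" using F by blast
  then show ?thesis using A by (rule card_of_ordLess_if_finite)
next
  case False
  have "\<forall>x\<in>S. |F x| \<le>o |S|"
    using F False card_of_ordLess_if_finite ordLess_imp_ordLeq by blast
  then have "|SIGMA x:S. F x| \<le>o |S|"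
    using card_of_Sigma_ordLeq_infinite[OF False card_of_mono1[OF order_refl]] by blast
  then show ?thesis using S by (rule ordLeq_ordLess_trans)
qed

lemma wo_rel_card_of: "wo_rel |A|"
  unfolding wo_rel_def by (rule card_of_Well_order)

lemma card_of_reflI: "x \<in> A \<Longrightarrow> (x, x) \<in> |A|"
  using refl_onD[OF wo_rel.REFL[OF wo_rel_card_of[of A]]] by (simp add: Field_card_of)

lemma ex_inj_on_Times_nat:
  fixes A :: "'a set"
  assumes "infinite A"
  shows "\<exists>enc :: 'a \<times> nat \<Rightarrow> 'a. inj_on enc (A \<times> UNIV)"
proof -
  have "|A \<times> (UNIV :: nat set)| =o |A|"
    using card_of_Times_infinite[OF assms] assms infinite_iff_card_of_nat by blast
  also have "|A| \<le>o |UNIV :: 'a set|" by (rule card_of_mono1) simp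
  finally show ?thesis using card_of_ordLeq[of "A \<times> UNIV" "UNIV :: 'a set"] by blast
qed

locale representation_construction =
  fixes I :: "'i set" and mu :: "'i \<Rightarrow> nat" and A :: "('i, nat) struc set set"
    and enc :: "'i univ \<times> nat \<Rightarrow> 'i univ"
  assumes signature: "signature I mu" and ideal: "ideal I mu A"
    and extension_property: "extension_property I mu A"
    and infinite: "infinite A" and enc: "inj_on enc (A \<times> UNIV)"
begin

definition rep :: "('i, nat) struc set \<Rightarrow> ('i, nat) struc"
  where "rep X = (SOME B. B \<in> X)"

definition codes :: "('i, nat) struc set set \<Rightarrow> 'i univ set"
  where "codes S = enc ` (SIGMA X:S. fst (rep X))"

definition prefix :: "('i, 'i univ) struc \<Rightarrow> ('i, nat) struc set set"
  where "prefix M = {X \<in> A. \<forall>Y. (Y, X) \<in> |A| \<longrightarrow> Y \<in> age I mu M}"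

definition candidates :: "('i, 'i univ) struc set"
  where "candidates =
    {M. is_struct I mu M \<and> age I mu M \<subseteq> A \<and> fst M \<subseteq> codes (prefix M)}"

lemma type_in_Omega: "X \<in> A \<Longrightarrow> X \<in> Omega I mu"
  using ideal unfolding ideal_def by blast

lemma rep_in:
  assumes "X \<in> A"
  shows "rep X \<in> X"
proof -
  obtain B where "B \<in> X" using Omega_member_nonempty[OF type_in_Omega[OF assms]] by blast
  then show ?thesis unfolding rep_def by (rule someI)
qed

lemma finite_rep:
  assumes "X \<in> A"
  shows "finite (fst (rep X))"
  using Omega_memberD(1)[OF type_in_Omega[OF assms] rep_in[OF assms]]
  unfolding fin_structs_def by blast

lemma isotype_rep:
  assumes "X \<in> A"
  shows "isotype I mu (rep X) = X"
  using Omega_memberD(2)[OF type_in_Omega[OF assms] rep_in[OF assms]] by (rule sym)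

lemma codes_mono: "S \<subseteq> T \<Longrightarrow> codes S \<subseteq> codes T"
  unfolding codes_def by blast

lemma enc_notin_codes:
  assumes "X \<in> A" "X \<notin> S" "S \<subseteq> A"
  shows "enc (X, n) \<notin> codes S"
proof
  assume "enc (X, n) \<in> codes S"
  then obtain Y m where "Y \<in> S" "enc (X, n) = enc (Y, m)" unfolding codes_def by blast
  then have "X = Y" using enc assms(1,3) by (auto dest: inj_onD)
  then show False using assms(2) \<open>Y \<in> S\<close> by blast
qed

lemma prefix_mono: "age I mu M \<subseteq> age I mu N \<Longrightarrow> prefix M \<subseteq> prefix N"
  unfolding prefix_def by blast

lemma prefix_subset_age: "prefix M \<subseteq> age I mu M"
  unfolding prefix_def using card_of_reflI[of _ A] by blast

lemma prefix_closed_below: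
  assumes X: "X \<in> prefix M" and YX: "(Y, X) \<in> |A|"
  shows "Y \<in> prefix M"
  unfolding prefix_def
proof (intro CollectI conjI allI impI)
  show "Y \<in> A" using FieldI1[OF YX] unfolding Field_card_of .
  fix Z assume "(Z, Y) \<in> |A|"
  then have "(Z, X) \<in> |A|" by (rule transD[OF wo_rel.TRANS[OF wo_rel_card_of[of A]] _ YX])
  then show "Z \<in> age I mu M" using X unfolding prefix_def by blast
qed

lemma empty_in_candidates: "({}, \<lambda>_ _. False) \<in> candidates"
proof -
  have "A \<noteq> {}" "A \<subseteq> Omega I mu" using ideal unfolding ideal_def by blast+
  then obtain Z T where "Z \<in> A" "T \<in> Z" using Omega_member_nonempty by blast
  have "embedding I mu (\<lambda>_. 0) ({} :: 'i univ set, \<lambda>_ _. False) T"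
    by (rule embedding_empty[OF signature]) simp
  then have "age I mu ({} :: 'i univ set, \<lambda>_ _. False) \<subseteq> A"
    by (rule age_subset_ideal[OF ideal \<open>Z \<in> A\<close> \<open>T \<in> Z\<close>])
  then show ?thesis unfolding candidates_def is_struct_def by simp
qed

lemma chain_upper_bound:
  assumes "\<C> \<in> Chains (relation_of substruct candidates)"
  shows "\<exists>U\<in>candidates. \<forall>M\<in>\<C>. substruct M U"
proof (cases "\<C> = {}")
  case True
  then show ?thesis using empty_in_candidates by blast
next
  case False
  have sub: "\<C> \<subseteq> candidates" using assms by (rule Chains_relation_of)
  have chain: "substruct M N \<or> substruct N M" if "M \<in> \<C>" "N \<in> \<C>" for M N
    using assms that unfolding Chains_def relation_of_def by blast
  have structs: "is_struct I mu M" if "M \<in> \<C>" for M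
    using sub that unfolding candidates_def by blast
  define U where "U = chain_union \<C>"
  have below: "substruct M U" if "M \<in> \<C>" for M
    unfolding U_def by (rule substruct_chain_union[OF chain that structs[OF that]])
  have age: "age I mu U = (\<Union>M\<in>\<C>. age I mu M)"
    unfolding U_def using chain structs False by (rule age_chain_union)
  have "fst M \<subseteq> codes (prefix U)" if "M \<in> \<C>" for M
  proof -
    have "fst M \<subseteq> codes (prefix M)" using sub that unfolding candidates_def by blast
    also have "\<dots> \<subseteq> codes (prefix U)"
      using age that by (intro codes_mono prefix_mono) blast
    finally show ?thesis .
  qed
  then have "fst U \<subseteq> codes (prefix U)" unfolding U_def chain_union_def by auto
  moreover have "age I mu U \<subseteq> A" using age sub unfolding candidates_def by blast
  moreover have "is_struct I mu U" unfolding U_def using structs by (rule is_struct_chain_union)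
  ultimately show ?thesis using below unfolding candidates_def by blast
qed

lemma least_missing_type:
  assumes "prefix M \<noteq> A"
  obtains X where "X \<in> A" "X \<notin> age I mu M" "prefix M \<subseteq> underS (card_of A) X"
    and "\<And>N. age I mu M \<subseteq> age I mu N \<Longrightarrow> X \<in> age I mu N \<Longrightarrow> X \<in> prefix N"
proof -
  let ?r = "|A|"
  have missing: "A - prefix M \<subseteq> Field ?r" "A - prefix M \<noteq> {}"
    using assms unfolding prefix_def Field_card_of by auto
  define X where "X = wo_rel.minim ?r (A - prefix M)"
  have X: "X \<in> A" "X \<notin> prefix M"
    unfolding X_def using wo_rel.minim_in[OF wo_rel_card_of[of A] missing] by auto
  have below_X: "Y \<in> prefix M" if "(Y, X) \<in> ?r" "Y \<noteq> X" for Y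
  proof (rule ccontr)
    assume "Y \<notin> prefix M"
    moreover have "Y \<in> A" using FieldI1[OF that(1)] by (simp add: Field_card_of)
    ultimately have "(X, Y) \<in> ?r"
      unfolding X_def using wo_rel.minim_least[OF wo_rel_card_of[of A] missing(1)] by blast
    then show False using that wo_rel.ANTISYM[OF wo_rel_card_of[of A]] unfolding antisym_def by blast
  qed
  have grow: "X \<in> prefix N" if "age I mu M \<subseteq> age I mu N" "X \<in> age I mu N" for N
  proof -
    have "Y \<in> age I mu N" if "(Y, X) \<in> ?r" for Y
      using below_X[OF that] prefix_subset_age \<open>age I mu M \<subseteq> age I mu N\<close> \<open>X \<in> age I mu N\<close>
      by blast
    then show ?thesis using X(1) unfolding prefix_def by blast
  qed
  have under: "prefix M \<subseteq> underS ?r X"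
  proof
    fix Y assume Y: "Y \<in> prefix M"
    have "Y \<in> A" using Y unfolding prefix_def by blast
    moreover have "X \<noteq> Y" using X(2) Y by blast
    moreover have "(X, Y) \<notin> ?r" using X(2) prefix_closed_below[OF Y] by blast
    ultimately show "Y \<in> underS ?r X"
      using X(1) wo_rel.TOTALS[OF wo_rel_card_of[of A]] unfolding underS_def Field_card_of by blast
  qed
  have "X \<notin> age I mu M" using grow[OF order_refl] X(2) by blast
  then show ?thesis by (rule that[OF X(1) _ under grow])
qed

lemma card_of_carrier_ordLess:
  assumes M: "M \<in> candidates" and X: "X \<in> A" "prefix M \<subseteq> underS (card_of A) X"
  shows "|fst M| <o |A|"
proof -
  have "|prefix M| \<le>o card_of (underS (card_of A) X)" using X(2) by (rule card_of_mono1)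
  moreover have "card_of (underS (card_of A) X) <o |A|"
    using card_of_underS[OF card_of_Card_order] X(1) by (simp add: Field_card_of)
  ultimately have "|prefix M| <o |A|" by (rule ordLeq_ordLess_trans)
  moreover have "\<forall>Y\<in>prefix M. finite (fst (rep Y))" using finite_rep unfolding prefix_def by blast
  ultimately have "|SIGMA Y:prefix M. fst (rep Y)| <o |A|"
    using infinite by (intro card_of_Sigma_finite_ordLess)
  moreover have "|fst M| \<le>o |SIGMA Y:prefix M. fst (rep Y)|"
  proof -
    have "|fst M| \<le>o |codes (prefix M)|"
      using M unfolding candidates_def by (intro card_of_mono1) blast
    also have "|codes (prefix M)| \<le>o |SIGMA Y:prefix M. fst (rep Y)|"
      unfolding codes_def by (rule card_of_image)
    finally show ?thesis .
  qed
  ultimately show ?thesis using ordLeq_ordLess_trans by blast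
qed

lemma ex_proper_extension:
  assumes M: "M \<in> candidates" and "prefix M \<noteq> A"
  shows "\<exists>M'\<in>candidates. substruct M M' \<and> M' \<noteq> M"
proof -
  obtain X where X: "X \<in> A" "X \<notin> age I mu M" "prefix M \<subseteq> underS (card_of A) X"
    and grow: "\<And>N. age I mu M \<subseteq> age I mu N \<Longrightarrow> X \<in> age I mu N \<Longrightarrow> X \<in> prefix N"
    using least_missing_type[OF assms(2)] by blast
  have struct: "is_struct I mu M" and "age I mu M \<subseteq> A" and coded: "fst M \<subseteq> codes (prefix M)"
    using M unfolding candidates_def by blast+
  then have "extendable I mu A M"
    using extension_property card_of_carrier_ordLess[OF M X(1,3)]
    unfolding extension_property_def by blast
  then obtain C :: "('i, 'i univ) struc"
    where C: "age I mu C \<subseteq> A" "embeds I mu M C" "embeds I mu (rep X) C"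
    using rep_in[OF X(1)] X(1) unfolding extendable_def by blast
  then obtain f g where f: "embedding I mu f M C" and g: "embedding I mu g (rep X) C"
    unfolding embeds_def by blast
  define h where "h n = enc (X, n)" for n
  have h: "inj_on h (fst (rep X))"
    using enc X(1) unfolding h_def by (auto simp: inj_on_def dest: inj_onD)
  have "X \<notin> prefix M" "prefix M \<subseteq> A" using X(2) prefix_subset_age unfolding prefix_def by blast+
  then have fresh: "h ` fst (rep X) \<inter> fst M = {}"
    using coded enc_notin_codes[OF X(1)] unfolding h_def by blast
  obtain M' where M': "is_struct I mu M'" "substruct M M'" "fst M' \<subseteq> fst M \<union> h ` fst (rep X)"
    "age I mu M' \<subseteq> age I mu C" "isotype I mu (rep X) \<in> age I mu M'"
    using ex_extension_realizing[OF struct f g finite_rep[OF X(1)] h fresh] by blast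
  have "age I mu M \<subseteq> age I mu M'" by (rule age_mono[OF embedding_substruct[OF M'(2)]])
  moreover have "X \<in> age I mu M'" using M'(5) isotype_rep[OF X(1)] by simp
  ultimately have "prefix M \<subseteq> prefix M'" "X \<in> prefix M'" using prefix_mono grow by blast+
  then have "fst M \<subseteq> codes (prefix M')" "h ` fst (rep X) \<subseteq> codes (prefix M')"
    using coded codes_mono unfolding codes_def h_def by blast+
  then have "fst M' \<subseteq> codes (prefix M')" using M'(3) by blast
  then have "M' \<in> candidates"
    using M'(1,4) C(1) unfolding candidates_def by blast
  moreover have "M' \<noteq> M" using X(2) \<open>X \<in> age I mu M'\<close> by auto
  ultimately show ?thesis using M'(2) by blast
qed

theorem ex_struct_with_age: "\<exists>S :: ('i, 'i univ) struc. is_struct I mu S \<and> age I mu S = A"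
proof -
  have "partial_order_on candidates (relation_of substruct candidates)"
  proof (rule partial_order_on_relation_ofI)
    show "substruct M M" if "M \<in> candidates" for M
      using that unfolding candidates_def by (blast intro: substruct_refl)
    show "M = N" if "M \<in> candidates" "N \<in> candidates" "substruct M N" "substruct N M" for M N
      using that substruct_antisym unfolding candidates_def by blast
  qed (rule substruct_trans)
  then obtain M where M: "M \<in> candidates" and maximal: "\<forall>N\<in>candidates. substruct M N \<longrightarrow> N = M"
    using predicate_Zorn chain_upper_bound by blast
  then have "prefix M = A" using ex_proper_extension by blast
  then show ?thesis using M prefix_subset_age unfolding candidates_def by blast
qed

end

lemma representable_if_infinite:
  assumes "signature I mu" "ideal I mu A" "extension_property I mu A" "infinite A"
  shows "\<exists>S :: ('i, 'i univ) struc. is_struct I mu S \<and> age I mu S = A"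
proof -
  obtain enc :: "'i univ \<times> nat \<Rightarrow> 'i univ" where "inj_on enc (A \<times> UNIV)"
    using ex_inj_on_Times_nat[OF assms(4)] by blast
  then interpret representation_construction I mu A enc
    using assms by unfold_locales
  show ?thesis by (rule ex_struct_with_age)
qed

theorem lemma1:
  fixes I :: "'i set" and mu :: "'i \<Rightarrow> nat" and A :: "('i, nat) struc set set"
  assumes "signature I mu"
    and "ideal I mu A"
    and "extension_property I mu A"
  shows "\<exists>S :: ('i, 'i univ) struc. is_struct I mu S \<and> age I mu S = A"
proof (cases "finite A")
  case True
  then show ?thesis using representable_if_finite[OF assms(2)] by blast
next
  case False
  then show ?thesis using representable_if_infinite[OF assms] by blast
qed

end
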